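(* Let $(\mathcal{X},\mathcal{B},\lambda)$ be a measure space with $\lambda$ positive and $\sigma$-finite, and $P$ a probability measure on it with density $f\in\mathcal{L}^2(\mathcal{X},\lambda)$ with respect to $\lambda$. Let $X_1,\dots,X_N$ be i.i.d. with law $P$. Let $f_1,\dots,f_m\in\mathcal{L}^2$ with $D_k=\int f_k^2d\lambda>0$, and assume condition $\mathcal{H}(p)$ (see context) holds for some $p\in[1,+\infty]$. Then for every $\varepsilon>0$, $$P^{\otimes N}\left\{\forall k\in\{1,\dots,m\},\ \forall g\in\mathcal{L}^2,\ d^2(\Pi_{\mathcal{CR}_{k,\varepsilon}}g,f)\le d^2(g,f)-d^2(\Pi_{\mathcal{CR}_{k,\varepsilon}}g,g)\right\}\ge1-\varepsilon.$$
   Context: $d^2(g,h)=\int(g-h)^2d\lambda$ on $\mathcal{L}^2=\mathcal{L}^2(\mathcal{X},\lambda)$. $\hat\alpha_k=\frac{\frac1N\sum_{i=1}^Nf_k(X_i)}{D_k}$. $\mathcal{M}_k=\{\alpha f_k:\alpha\in\mathbb{R}\}$, $\Pi_{\mathcal{M}_k}$ the orthogonal projection onto it. Condition $\mathcal{H}(p)$: for $1<p<\infty$ with $\frac1p+\frac1q=1$, there are known constants $c,c_1,\dots,c_m>0$ with $(\int|f_k|^{2p}d\lambda)^{1/p}\le c_k\int f_k^2d\lambda$ for all $k$ and $(\int|f|^qd\lambda)^{1/q}\le c$; for $p=1$: $f\le c$ everywhere and $c_k=1$; for $p=\infty$: $|f_k|\le\sqrt{c_kD_k}$ everywhere and $c=1$.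 $C_k=c_kc$. $\beta(\varepsilon,k)=\frac{4[1+\log\frac{2m}{\varepsilon}]}{N}\left[\frac{\frac1N\sum_if_k(X_i)^2}{D_k}+C_k\right]$ and $\mathcal{CR}_{k,\varepsilon}=\{g\in\mathcal{L}^2:d^2(\hat\alpha_kf_k,\Pi_{\mathcal{M}_k}g)\le\beta(\varepsilon,k)\}$, a closed convex set; $\Pi_{\mathcal{CR}_{k,\varepsilon}}$ denotes the metric (nearest-point) projection onto it in $\mathcal{L}^2$. *)

theory Defs
  imports "HOL-Probability.Probability"
begin

definition L2 :: "'a measure \<Rightarrow> ('a \<Rightarrow> real) set" where
  "L2 M = {g. g \<in> borel_measurable M \<and> integrable M (\<lambda>x. (g x)\<^sup>2)}"

definition d2 :: "'a measure \<Rightarrow> ('a \<Rightarrow> real) \<Rightarrow> ('a \<Rightarrow> real) \<Rightarrow> real" where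
  "d2 M g h = (\<integral>x. (g x - h x)\<^sup>2 \<partial>M)"

definition Dk :: "'a measure \<Rightarrow> ('a \<Rightarrow> real) \<Rightarrow> real" where
  "Dk M fk = (\<integral>x. (fk x)\<^sup>2 \<partial>M)"

definition proj_line :: "'a measure \<Rightarrow> ('a \<Rightarrow> real) \<Rightarrow> ('a \<Rightarrow> real) \<Rightarrow> ('a \<Rightarrow> real)" where
  "proj_line M fk g = (\<lambda>x. ((\<integral>y. g y * fk y \<partial>M) / Dk M fk) * fk x)"

definition metric_proj :: "'a measure \<Rightarrow> ('a \<Rightarrow> real) set \<Rightarrow> ('a \<Rightarrow> real) \<Rightarrow> ('a \<Rightarrow> real)" where
  "metric_proj M C g = (SOME h. h \<in> C \<and> (\<forall>h'\<in>C. d2 M g h \<le> d2 M g h'))"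

definition alpha_hat :: "'a measure \<Rightarrow> ('a \<Rightarrow> real) \<Rightarrow> nat \<Rightarrow> (nat \<Rightarrow> 'a) \<Rightarrow> real" where
  "alpha_hat M fk N X = ((1 / real N) * (\<Sum>i\<in>{1..N}. fk (X i))) / Dk M fk"

text \<open>beta(eps,k), with C_k = c_k * c.\<close>
definition beta :: "'a measure \<Rightarrow> ('a \<Rightarrow> real) \<Rightarrow> nat \<Rightarrow> real \<Rightarrow> real \<Rightarrow> nat \<Rightarrow> (nat \<Rightarrow> 'a) \<Rightarrow> real" where
  "beta M fk m Ck eps N X =
     4 * (1 + ln (2 * real m / eps)) / real N *
     (((1 / real N) * (\<Sum>i\<in>{1..N}. (fk (X i))\<^sup>2)) / Dk M fk + Ck)"

definition CR :: "'a measure \<Rightarrow> ('a \<Rightarrow> real) \<Rightarrow> nat \<Rightarrow> real \<Rightarrow> real \<Rightarrow> nat \<Rightarrow> (nat \<Rightarrow> 'a)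
                 \<Rightarrow> ('a \<Rightarrow> real) set" where
  "CR M fk m Ck eps N X =
     {g \<in> L2 M. d2 M (\<lambda>x. alpha_hat M fk N X * fk x) (proj_line M fk g) \<le> beta M fk m Ck eps N X}"

definition cond_H :: "'a measure \<Rightarrow> ('a \<Rightarrow> real) \<Rightarrow> (nat \<Rightarrow> 'a \<Rightarrow> real) \<Rightarrow> nat
                      \<Rightarrow> ereal \<Rightarrow> real \<Rightarrow> (nat \<Rightarrow> real) \<Rightarrow> bool" where
  "cond_H M f fs m p c cs \<longleftrightarrow>
     c > 0 \<and> (\<forall>k\<in>{1..m}. cs k > 0) \<and>
     (if p = 1 then
        (\<forall>x\<in>space M. f x \<le> c) \<and> (\<forall>k\<in>{1..m}. cs k = 1)
      else if p = \<infinity> then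
        (\<forall>k\<in>{1..m}. \<forall>x\<in>space M. \<bar>fs k x\<bar> \<le> sqrt (cs k * Dk M (fs k))) \<and> c = 1
      else
        (let p' = real_of_ereal p; q = p' / (p' - 1) in
          (\<forall>k\<in>{1..m}. integrable M (\<lambda>x. \<bar>fs k x\<bar> powr (2 * p')) \<and>
              (\<integral>x. \<bar>fs k x\<bar> powr (2 * p') \<partial>M) powr (1 / p') \<le> cs k * Dk M (fs k)) \<and>
          integrable M (\<lambda>x. \<bar>f x\<bar> powr q) \<and>
          (\<integral>x. \<bar>f x\<bar> powr q \<partial>M) powr (1 / q) \<le> c))"

end

theory Submission
  imports Defs
begin

(* For each k the confidence region CR_{k,eps} is a slab
   {g. (alpha_hat_k - <g, f_k>/D_k)^2 D_k <= beta}: a convex set with nearest points, so the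
   inequality holds for every g as soon as f lies in the slab (obtuse-angle property of
   projections onto convex sets), and taking g = f shows the converse.  Hence the event fails
   for index k exactly when the centred sum S = sum_i f_k(X_i) - N E f_k(X) satisfies
   S^2 > 4 L (sum_i f_k(X_i)^2 + N C_k D_k) with L = 1 + log(2m/eps), where condition H(p)
   gives E f_k(X)^2 <= C_k D_k by Hoelder's inequality.
   Since exp(x - x^2/2) <= 1 + x + x^2/2, the supermartingale-type bound
   E exp(t S - t^2 V/2) <= 1 holds with V = sum_i f_k(X_i)^2 + N E f_k(X)^2; averaging over a
   Gaussian prior on t and applying Young's inequality bounds the deviation probability by
   3 e^(-L), and a union bound over k gives 3 m e^(-L) = 3 eps / (2 e) <= eps. *)

lemma L2_measurable: "g \<in> L2 M \<Longrightarrow> g \<in> borel_measurable M"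
  by (simp add: L2_def)

lemma L2_square_integrable: "g \<in> L2 M \<Longrightarrow> integrable M (\<lambda>x. (g x)\<^sup>2)"
  by (simp add: L2_def)

lemma L2_mult_integrable:
  assumes "g \<in> L2 M" "h \<in> L2 M"
  shows "integrable M (\<lambda>x. g x * h x)"
proof (rule Bochner_Integration.integrable_bound)
  show "integrable M (\<lambda>x. (g x)\<^sup>2 + (h x)\<^sup>2)" "(\<lambda>x. g x * h x) \<in> borel_measurable M"
    using assms by (auto simp: L2_def)
  have "\<bar>g x * h x\<bar> \<le> (g x)\<^sup>2 + (h x)\<^sup>2" for x
  proof -
    have "\<bar>g x * h x\<bar> \<le> 2 * (\<bar>g x\<bar> * \<bar>h x\<bar>)"
      by (simp add: abs_mult)
    also have "\<dots> \<le> (g x)\<^sup>2 + (h x)\<^sup>2"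
      using sum_squares_bound[of "\<bar>g x\<bar>" "\<bar>h x\<bar>"] by (simp add: mult.assoc)
    finally show ?thesis .
  qed
  then show "AE x in M. norm (g x * h x) \<le> norm ((g x)\<^sup>2 + (h x)\<^sup>2)"
    by simp
qed

lemma L2_linear_combination:
  assumes "g \<in> L2 M" "h \<in> L2 M"
  shows "(\<lambda>x. a * g x + b * h x) \<in> L2 M"
proof -
  have "(\<lambda>x. (a * g x + b * h x)\<^sup>2) = (\<lambda>x. a\<^sup>2 * (g x)\<^sup>2 + (2 * a * b) * (g x * h x) + b\<^sup>2 * (h x)\<^sup>2)"
    by (simp add: fun_eq_iff power2_eq_square algebra_simps)
  then have "integrable M (\<lambda>x. (a * g x + b * h x)\<^sup>2)"
    using assms L2_mult_integrable[OF assms] by (simp add: L2_def)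
  moreover have "g \<in> borel_measurable M" "h \<in> borel_measurable M"
    using assms by (auto simp: L2_def)
  then have "(\<lambda>x. a * g x + b * h x) \<in> borel_measurable M"
    by auto
  ultimately show ?thesis
    by (auto simp: L2_def)
qed

lemma L2_diff: "g \<in> L2 M \<Longrightarrow> h \<in> L2 M \<Longrightarrow> (\<lambda>x. g x - h x) \<in> L2 M"
  using L2_linear_combination[of g M h 1 "-1"] by simp

lemma L2_add_scaled: "g \<in> L2 M \<Longrightarrow> h \<in> L2 M \<Longrightarrow> (\<lambda>x. g x + t * h x) \<in> L2 M"
  using L2_linear_combination[of g M h 1 t] by simp

lemma integral_square_diff_scaled:
  assumes "u \<in> L2 M" "v \<in> L2 M"
  shows "(\<integral>x. (u x - t * v x)\<^sup>2 \<partial>M)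
    = (\<integral>x. (u x)\<^sup>2 \<partial>M) - 2 * t * (\<integral>x. u x * v x \<partial>M) + t\<^sup>2 * (\<integral>x. (v x)\<^sup>2 \<partial>M)"
proof -
  have "(\<lambda>x. (u x - t * v x)\<^sup>2) = (\<lambda>x. (u x)\<^sup>2 - (2 * t) * (u x * v x) + t\<^sup>2 * (v x)\<^sup>2)"
    by (auto simp: power2_eq_square algebra_simps)
  moreover have "integrable M (\<lambda>x. (u x)\<^sup>2)" "integrable M (\<lambda>x. (v x)\<^sup>2)"
    using assms by (auto simp: L2_def)
  ultimately show ?thesis
    using L2_mult_integrable[OF assms] by simp
qed

lemma L2_Cauchy_Schwarz:
  assumes "u \<in> L2 M" "v \<in> L2 M"
  shows "(\<integral>x. u x * v x \<partial>M)\<^sup>2 \<le> (\<integral>x. (u x)\<^sup>2 \<partial>M) * (\<integral>x. (v x)\<^sup>2 \<partial>M)"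
proof -
  define A where "A = (\<integral>x. (u x)\<^sup>2 \<partial>M)"
  define B where "B = (\<integral>x. u x * v x \<partial>M)"
  define D where "D = (\<integral>x. (v x)\<^sup>2 \<partial>M)"
  have quadratic: "0 \<le> A - 2 * t * B + t\<^sup>2 * D" for t
    using integral_square_diff_scaled[OF assms, of t] integral_nonneg_AE[of "\<lambda>x. (u x - t * v x)\<^sup>2" M]
    unfolding A_def B_def D_def by simp
  show ?thesis
  proof (cases "D = 0")
    case True
    have "B = 0"
    proof (rule ccontr)
      assume "B \<noteq> 0"
      then show False
        using quadratic[of "(A + 1) / (2 * B)"] True by (simp add: field_simps)
    qed
    then show ?thesis
      unfolding A_def B_def D_def by simp
  next
    case False
    then have "D > 0"
      unfolding D_def by (simp add: order_le_neq_trans)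
    have "0 \<le> A - 2 * (B / D) * B + (B / D)\<^sup>2 * D"
      by (rule quadratic)
    also have "\<dots> = A - B\<^sup>2 / D"
      using \<open>D > 0\<close> by (simp add: field_simps power2_eq_square)
    finally show ?thesis
      using \<open>D > 0\<close> unfolding A_def B_def D_def by (simp add: field_simps)
  qed
qed

definition line_coeff :: "'a measure \<Rightarrow> ('a \<Rightarrow> real) \<Rightarrow> ('a \<Rightarrow> real) \<Rightarrow> real" where
  "line_coeff M fk g = (\<integral>y. g y * fk y \<partial>M) / Dk M fk"

definition slab :: "'a measure \<Rightarrow> ('a \<Rightarrow> real) \<Rightarrow> real \<Rightarrow> real \<Rightarrow> ('a \<Rightarrow> real) set" where
  "slab M fk a b = {g \<in> L2 M. (a - line_coeff M fk g)\<^sup>2 * Dk M fk \<le> b}"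

lemma CR_eq_slab: "CR M fk m Ck eps N X = slab M fk (alpha_hat M fk N X) (beta M fk m Ck eps N X)"
proof -
  have "d2 M (\<lambda>x. a * fk x) (proj_line M fk g) = (a - line_coeff M fk g)\<^sup>2 * Dk M fk" for a g
  proof -
    have "(\<lambda>x. (a * fk x - proj_line M fk g x)\<^sup>2) = (\<lambda>x. (a - line_coeff M fk g)\<^sup>2 * (fk x)\<^sup>2)"
      unfolding proj_line_def line_coeff_def by (simp add: fun_eq_iff power2_eq_square algebra_simps)
    then show ?thesis
      unfolding d2_def Dk_def by simp
  qed
  then show ?thesis
    unfolding CR_def slab_def by simp
qed

lemma line_coeff_add_scaled:
  assumes "g \<in> L2 M" "h \<in> L2 M" "fk \<in> L2 M"
  shows "line_coeff M fk (\<lambda>x. g x + t * h x) = line_coeff M fk g + t * line_coeff M fk h"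
proof -
  have "(\<lambda>x. (g x + t * h x) * fk x) = (\<lambda>x. g x * fk x + t * (h x * fk x))"
    by (simp add: fun_eq_iff algebra_simps)
  then have "(\<integral>x. (g x + t * h x) * fk x \<partial>M) = (\<integral>x. g x * fk x \<partial>M) + t * (\<integral>x. h x * fk x \<partial>M)"
    using L2_mult_integrable[OF assms(1,3)] L2_mult_integrable[OF assms(2,3)] by simp
  then show ?thesis
    unfolding line_coeff_def by (simp add: add_divide_distrib)
qed

lemma line_coeff_diff:
  assumes "g \<in> L2 M" "h \<in> L2 M" "fk \<in> L2 M"
  shows "line_coeff M fk (\<lambda>x. g x - h x) = line_coeff M fk g - line_coeff M fk h"
  using line_coeff_add_scaled[OF assms, of "-1"] by simp

lemma line_coeff_self: "Dk M fk \<noteq> 0 \<Longrightarrow> line_coeff M fk fk = 1"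
  unfolding line_coeff_def Dk_def by (simp add: power2_eq_square)

lemma square_convex_combination_le:
  fixes A B t :: real
  assumes "0 \<le> t" "t \<le> 1"
  shows "((1 - t) * A + t * B)\<^sup>2 \<le> (1 - t) * A\<^sup>2 + t * B\<^sup>2"
proof -
  have "(1 - t) * A\<^sup>2 + t * B\<^sup>2 - ((1 - t) * A + t * B)\<^sup>2 = t * (1 - t) * (A - B)\<^sup>2"
    by (simp add: power2_eq_square algebra_simps)
  moreover have "0 \<le> t * (1 - t) * (A - B)\<^sup>2"
    using assms by simp
  ultimately show ?thesis
    by linarith
qed

lemma slab_segment_closed:
  assumes h: "h \<in> slab M fk a b" and f: "f \<in> slab M fk a b" and fk: "fk \<in> L2 M"
    and "Dk M fk \<ge> 0" "0 \<le> t" "t \<le> 1"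
  shows "(\<lambda>x. h x + t * (f x - h x)) \<in> slab M fk a b"
proof -
  define ch cf where "ch = line_coeff M fk h" and "cf = line_coeff M fk f"
  have hL: "h \<in> L2 M" and fL: "f \<in> L2 M" and "(a - ch)\<^sup>2 * Dk M fk \<le> b" "(a - cf)\<^sup>2 * Dk M fk \<le> b"
    using h f unfolding slab_def ch_def cf_def by auto
  have fhL: "(\<lambda>x. f x - h x) \<in> L2 M"
    using L2_diff[OF fL hL] .
  have "line_coeff M fk (\<lambda>x. h x + t * (f x - h x)) = ch + t * (cf - ch)"
    using line_coeff_add_scaled[OF hL fhL fk] line_coeff_diff[OF fL hL fk] unfolding ch_def cf_def by simp
  also have "a - (ch + t * (cf - ch)) = (1 - t) * (a - ch) + t * (a - cf)"
    by (simp add: algebra_simps)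
  finally have "(a - line_coeff M fk (\<lambda>x. h x + t * (f x - h x)))\<^sup>2 * Dk M fk
      \<le> ((1 - t) * (a - ch)\<^sup>2 + t * (a - cf)\<^sup>2) * Dk M fk"
    using square_convex_combination_le assms(4-6) by (simp add: mult_right_mono)
  also have "\<dots> = (1 - t) * ((a - ch)\<^sup>2 * Dk M fk) + t * ((a - cf)\<^sup>2 * Dk M fk)"
    by (simp add: algebra_simps)
  also have "\<dots> \<le> (1 - t) * b + t * b"
    using \<open>(a - ch)\<^sup>2 * Dk M fk \<le> b\<close> \<open>(a - cf)\<^sup>2 * Dk M fk \<le> b\<close> assms(5,6)
    by (intro add_mono mult_left_mono) auto
  finally show ?thesis
    using L2_add_scaled[OF hL fhL] unfolding slab_def by (simp add: algebra_simps)
qed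

lemma line_coeff_diff_square_le_d2:
  assumes g: "g \<in> L2 M" and h: "h \<in> L2 M" and fk: "fk \<in> L2 M" and D: "Dk M fk > 0"
  shows "(line_coeff M fk g - line_coeff M fk h)\<^sup>2 * Dk M fk \<le> d2 M g h"
proof -
  have "line_coeff M fk g - line_coeff M fk h = (\<integral>x. (g x - h x) * fk x \<partial>M) / Dk M fk"
    using line_coeff_diff[OF g h fk] unfolding line_coeff_def by simp
  then have "(line_coeff M fk g - line_coeff M fk h)\<^sup>2 * Dk M fk
      = (\<integral>x. (g x - h x) * fk x \<partial>M)\<^sup>2 / Dk M fk"
    using D by (simp add: power2_eq_square)
  also have "\<dots> \<le> d2 M g h"
    using L2_Cauchy_Schwarz[OF L2_diff[OF g h] fk] D unfolding d2_def Dk_def by (simp add: divide_le_eq)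
  finally show ?thesis .
qed

lemma mem_slab_iff:
  assumes "Dk M fk > 0" "b \<ge> 0"
  shows "g \<in> slab M fk a b \<longleftrightarrow> g \<in> L2 M \<and> \<bar>a - line_coeff M fk g\<bar> \<le> sqrt (b / Dk M fk)"
proof -
  have "(a - c)\<^sup>2 * Dk M fk \<le> b \<longleftrightarrow> \<bar>a - c\<bar> \<le> sqrt (b / Dk M fk)" for c
    using assms by (metis pos_le_divide_eq real_sqrt_abs real_sqrt_le_iff)
  then show ?thesis
    unfolding slab_def by blast
qed

text \<open>The nearest point clamps the coefficient of \<open>g\<close> to the interval
  \<open>[a - r, a + r]\<close>, \<open>r = sqrt (b / D)\<close>, and moves \<open>g\<close> along \<open>fk\<close> only.\<close>
lemma slab_nearest_point_exists:
  assumes fk: "fk \<in> L2 M" and D: "Dk M fk > 0" and b: "b \<ge> 0" and g: "g \<in> L2 M"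
  shows "\<exists>h\<in>slab M fk a b. \<forall>h'\<in>slab M fk a b. d2 M g h \<le> d2 M g h'"
proof -
  define cg r where "cg = line_coeff M fk g" and "r = sqrt (b / Dk M fk)"
  define cl where "cl = max (a - r) (min (a + r) cg)"
  define h where "h = (\<lambda>x. g x + (cl - cg) * fk x)"
  have "r \<ge> 0"
    using b D unfolding r_def by simp
  have "h \<in> L2 M"
    unfolding h_def using L2_add_scaled[OF g fk] .
  moreover have "line_coeff M fk h = cl"
    unfolding h_def using line_coeff_add_scaled[OF g fk fk] line_coeff_self[of M fk] D cg_def by simp
  moreover have "\<bar>a - cl\<bar> \<le> r"
    unfolding cl_def using \<open>r \<ge> 0\<close> by auto
  ultimately have h_in: "h \<in> slab M fk a b"
    using mem_slab_iff[OF D b] unfolding r_def by simp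
  have "(\<lambda>x. (g x - h x)\<^sup>2) = (\<lambda>x. (cg - cl)\<^sup>2 * (fk x)\<^sup>2)"
    unfolding h_def by (simp add: fun_eq_iff power2_eq_square algebra_simps)
  then have d2_h: "d2 M g h = (cg - cl)\<^sup>2 * Dk M fk"
    unfolding d2_def Dk_def by simp
  have "d2 M g h \<le> d2 M g h'" if h': "h' \<in> slab M fk a b" for h'
  proof -
    define c' where "c' = line_coeff M fk h'"
    have h'L: "h' \<in> L2 M" and "\<bar>a - c'\<bar> \<le> r"
      using h' mem_slab_iff[OF D b] unfolding c'_def r_def by auto
    then have "\<bar>cg - cl\<bar> \<le> \<bar>cg - c'\<bar>"
      unfolding cl_def by auto
    then have "(cg - cl)\<^sup>2 * Dk M fk \<le> (cg - c')\<^sup>2 * Dk M fk"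
      using D by (simp add: abs_le_square_iff)
    also have "\<dots> \<le> d2 M g h'"
      using line_coeff_diff_square_le_d2[OF g h'L fk D] unfolding cg_def c'_def .
    finally show ?thesis
      unfolding d2_h .
  qed
  then show ?thesis
    using h_in by blast
qed

lemma metric_proj_slab:
  assumes "fk \<in> L2 M" "Dk M fk > 0" "b \<ge> 0" "g \<in> L2 M"
  shows "metric_proj M (slab M fk a b) g \<in> slab M fk a b"
    and "\<And>h. h \<in> slab M fk a b \<Longrightarrow> d2 M g (metric_proj M (slab M fk a b) g) \<le> d2 M g h"
  using someI_ex[OF slab_nearest_point_exists[OF assms, of a, unfolded Bex_def]]
  unfolding metric_proj_def by auto

lemma nonpos_if_linear_le_quadratic:
  fixes B C :: real
  assumes "\<And>t. 0 < t \<Longrightarrow> t \<le> 1 \<Longrightarrow> 2 * t * B \<le> t\<^sup>2 * C"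
  shows "B \<le> 0"
proof (rule ccontr)
  assume "\<not> B \<le> 0"
  define t where "t = min 1 (B / (\<bar>C\<bar> + 1))"
  have "0 < t" "t \<le> 1"
    using \<open>\<not> B \<le> 0\<close> unfolding t_def by auto
  have "2 * B \<le> t * C"
    using assms[OF \<open>0 < t\<close> \<open>t \<le> 1\<close>] \<open>0 < t\<close> by (simp add: power2_eq_square)
  also have "\<dots> \<le> t * \<bar>C\<bar>"
    using \<open>0 < t\<close> by (simp add: mult_left_mono)
  also have "\<dots> \<le> B / (\<bar>C\<bar> + 1) * \<bar>C\<bar>"
    unfolding t_def by (intro mult_right_mono) auto
  also have "\<dots> < 2 * B"
  proof -
    have "0 \<le> B * \<bar>C\<bar>"
      using \<open>\<not> B \<le> 0\<close> by simp
    then have "0 < B * \<bar>C\<bar> + B * 2"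
      using \<open>\<not> B \<le> 0\<close> by linarith
    then show ?thesis
      by (simp add: field_simps)
  qed
  finally show False
    by simp
qed

lemma nearest_point_obtuse_angle:
  assumes "C \<subseteq> L2 M" "g \<in> L2 M" "h \<in> C" "f \<in> C"
    and segment: "\<And>t. 0 < t \<Longrightarrow> t \<le> 1 \<Longrightarrow> (\<lambda>x. h x + t * (f x - h x)) \<in> C"
    and nearest: "\<And>h'. h' \<in> C \<Longrightarrow> d2 M g h \<le> d2 M g h'"
  shows "d2 M h f \<le> d2 M g f - d2 M h g"
proof -
  define u v where "u = (\<lambda>x. g x - h x)" and "v = (\<lambda>x. f x - h x)"
  have uL: "u \<in> L2 M" and vL: "v \<in> L2 M"
    using assms(1-4) L2_diff unfolding u_def v_def by blast+
  define A B D where "A = (\<integral>x. (u x)\<^sup>2 \<partial>M)" and "B = (\<integral>x. u x * v x \<partial>M)"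
    and "D = (\<integral>x. (v x)\<^sup>2 \<partial>M)"
  have d2_segment: "d2 M g (\<lambda>x. h x + t * (f x - h x)) = A - 2 * t * B + t\<^sup>2 * D" for t
  proof -
    have "(\<lambda>x. (g x - (h x + t * (f x - h x)))\<^sup>2) = (\<lambda>x. (u x - t * v x)\<^sup>2)"
      unfolding u_def v_def by (simp add: fun_eq_iff algebra_simps)
    then show ?thesis
      unfolding d2_def A_def B_def D_def using integral_square_diff_scaled[OF uL vL] by simp
  qed
  have "d2 M g h = A"
    unfolding d2_def A_def u_def ..
  then have "2 * t * B \<le> t\<^sup>2 * D" if "0 < t" "t \<le> 1" for t
    using nearest[OF segment[OF that]] d2_segment[of t] by simp
  then have "B \<le> 0"
    by (rule nonpos_if_linear_le_quadratic)
  moreover have "d2 M g f = A - 2 * B + D"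
    using d2_segment[of 1] by simp
  moreover have "d2 M h f = D" "d2 M h g = A"
    unfolding d2_def A_def D_def u_def v_def by (simp_all add: power2_commute)
  ultimately show ?thesis
    by simp
qed

lemma projection_inequality_iff_mem_slab:
  assumes fk: "fk \<in> L2 M" and D: "Dk M fk > 0" and b: "b \<ge> 0" and fL: "f \<in> L2 M"
  shows "(\<forall>g\<in>L2 M. d2 M (metric_proj M (slab M fk a b) g) f
            \<le> d2 M g f - d2 M (metric_proj M (slab M fk a b) g) g)
     \<longleftrightarrow> f \<in> slab M fk a b"
proof (intro iffI ballI)
  fix g
  assume f: "f \<in> slab M fk a b" and g: "g \<in> L2 M"
  note proj = metric_proj_slab[OF fk D b g]
  show "d2 M (metric_proj M (slab M fk a b) g) f
      \<le> d2 M g f - d2 M (metric_proj M (slab M fk a b) g) g"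
  proof (rule nearest_point_obtuse_angle[OF _ g proj(1) f])
    show "slab M fk a b \<subseteq> L2 M"
      unfolding slab_def by blast
    show "(\<lambda>x. metric_proj M (slab M fk a b) g x + t * (f x - metric_proj M (slab M fk a b) g x))
        \<in> slab M fk a b" if "0 < t" "t \<le> 1" for t
      using slab_segment_closed[OF proj(1) f fk] D that by simp
  qed (rule proj(2))
next
  assume "\<forall>g\<in>L2 M. d2 M (metric_proj M (slab M fk a b) g) f
      \<le> d2 M g f - d2 M (metric_proj M (slab M fk a b) g) g"
  moreover have "d2 M f f = 0"
    unfolding d2_def by simp
  ultimately have "d2 M (metric_proj M (slab M fk a b) f) f \<le> 0"
    using fL by fastforce
  define h where "h = metric_proj M (slab M fk a b) f"
  have h: "h \<in> slab M fk a b" and hL: "h \<in> L2 M"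
    using metric_proj_slab(1)[OF fk D b fL] unfolding h_def slab_def by auto
  have "(\<integral>x. (h x - f x) * fk x \<partial>M)\<^sup>2 \<le> (\<integral>x. (h x - f x)\<^sup>2 \<partial>M) * Dk M fk"
    using L2_Cauchy_Schwarz[OF L2_diff[OF hL fL] fk] unfolding Dk_def .
  also have "\<dots> \<le> 0"
    using \<open>d2 M (metric_proj M (slab M fk a b) f) f \<le> 0\<close> D
    unfolding h_def d2_def by (simp add: mult_nonpos_nonneg)
  finally have "line_coeff M fk (\<lambda>x. h x - f x) = 0"
    unfolding line_coeff_def by simp
  then have "line_coeff M fk h = line_coeff M fk f"
    using line_coeff_diff[OF hL fL fk] by simp
  then show "f \<in> slab M fk a b"
    using h fL unfolding slab_def by simp
qed

lemma prob_density_integral: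
  assumes f: "f \<in> borel_measurable M" "\<forall>x\<in>space M. f x \<ge> 0" and "prob_space (density M f)"
  shows "integrable M f" "(\<integral>x. f x \<partial>M) = 1"
proof -
  have "(\<integral>\<^sup>+ x. ennreal (f x) \<partial>M) = (\<integral>\<^sup>+ x. ennreal (f x) * indicator (space M) x \<partial>M)"
    by (rule nn_integral_cong) simp
  also have "\<dots> = emeasure (density M f) (space M)"
    using f by (simp add: emeasure_density)
  also have "\<dots> = ennreal 1"
    using prob_space.emeasure_space_1[OF assms(3)] by simp
  finally have nn: "(\<integral>\<^sup>+ x. ennreal (f x) \<partial>M) = ennreal 1" .
  have AE: "AE x in M. 0 \<le> f x"
    using f by (intro AE_I2) auto
  show int: "integrable M f"
    using integrableI_nn_integral_finite[OF f(1) AE nn] .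
  show "(\<integral>x. f x \<partial>M) = 1"
    using nn_integral_eq_integral[OF int AE] nn integral_nonneg_AE[OF AE] by simp
qed

lemma weighted_integral_le:
  fixes f g bd :: "'a \<Rightarrow> real"
  assumes fm: "f \<in> borel_measurable M" and f0: "\<forall>x\<in>space M. f x \<ge> 0"
    and gm: "g \<in> borel_measurable M" and g0: "\<forall>x\<in>space M. g x \<ge> 0"
    and bd: "integrable M bd" and le: "\<And>x. x \<in> space M \<Longrightarrow> f x * g x \<le> bd x"
  shows "integrable M (\<lambda>x. f x * g x)" "(\<integral>x. f x * g x \<partial>M) \<le> (\<integral>x. bd x \<partial>M)"
proof -
  show int: "integrable M (\<lambda>x. f x * g x)"
  proof (rule Bochner_Integration.integrable_bound[OF bd])
    show "(\<lambda>x. f x * g x) \<in> borel_measurable M"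
      using fm gm by simp
    show "AE x in M. norm (f x * g x) \<le> norm (bd x)"
    proof (rule AE_I2)
      fix x
      assume "x \<in> space M"
      then show "norm (f x * g x) \<le> norm (bd x)"
        using f0 g0 le[of x] by simp
    qed
  qed
  show "(\<integral>x. f x * g x \<partial>M) \<le> (\<integral>x. bd x \<partial>M)"
    using int bd le by (intro integral_mono) auto
qed

lemma power2_powr: "(a\<^sup>2) powr p = \<bar>a :: real\<bar> powr (2 * p)"
proof (cases "a = 0")
  case False
  then have "a\<^sup>2 = \<bar>a\<bar> powr 2"
    by (simp add: powr_numeral)
  then show ?thesis
    by (simp only: powr_powr)
qed simp

lemma weighted_square_integral_le_Hoelder:
  assumes fm: "f \<in> borel_measurable M" and f0: "\<forall>x\<in>space M. f x \<ge> 0" and fkL: "fk \<in> L2 M"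
    and p: "p > 1" and q: "q = p / (p - 1)" and A: "A > 0" and B: "B > 0"
    and i1: "integrable M (\<lambda>x. \<bar>fk x\<bar> powr (2 * p))"
    and h1: "(\<integral>x. \<bar>fk x\<bar> powr (2 * p) \<partial>M) powr (1 / p) \<le> A"
    and i2: "integrable M (\<lambda>x. \<bar>f x\<bar> powr q)"
    and h2: "(\<integral>x. \<bar>f x\<bar> powr q \<partial>M) powr (1 / q) \<le> B"
  shows "integrable M (\<lambda>x. f x * (fk x)\<^sup>2)" "(\<integral>x. f x * (fk x)\<^sup>2 \<partial>M) \<le> A * B"
proof -
  have q1: "q > 1" and pq: "1 / p + 1 / q = 1"
    unfolding q using p by (simp_all add: field_simps)
  define I1 I2 where "I1 = (\<integral>x. \<bar>fk x\<bar> powr (2 * p) \<partial>M)" and "I2 = (\<integral>x. \<bar>f x\<bar> powr q \<partial>M)"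
  have "I1 = (I1 powr (1 / p)) powr p"
    using p unfolding I1_def by (simp add: powr_powr)
  also have "\<dots> \<le> A powr p"
    using h1 p unfolding I1_def by (intro powr_mono2) auto
  finally have I1: "I1 \<le> A powr p" .
  have "I2 = (I2 powr (1 / q)) powr q"
    using q1 unfolding I2_def by (simp add: powr_powr)
  also have "\<dots> \<le> B powr q"
    using h2 q1 unfolding I2_def by (intro powr_mono2) auto
  finally have I2: "I2 \<le> B powr q" .
  define bd where "bd = (\<lambda>x. A * B * (\<bar>fk x\<bar> powr (2 * p) / (p * A powr p) + \<bar>f x\<bar> powr q / (q * B powr q)))"
  have fk_meas: "fk \<in> borel_measurable M"
    using L2_measurable[OF fkL] .
  have bd_int: "integrable M bd"
    unfolding bd_def using i1 i2 by (simp add: add_divide_distrib)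
  have "f x * (fk x)\<^sup>2 \<le> bd x" if x: "x \<in> space M" for x
  proof -
    define a b where "a = (fk x)\<^sup>2 / A" and "b = f x / B"
    have "a \<ge> 0" "b \<ge> 0"
      unfolding a_def b_def using A B f0 x by auto
    have "f x * (fk x)\<^sup>2 = A * B * (a * b)"
      unfolding a_def b_def using A B by (simp add: field_simps)
    also have "\<dots> \<le> A * B * (a powr p / p + b powr q / q)"
      using Youngs_inequality[OF p q1 pq \<open>a \<ge> 0\<close> \<open>b \<ge> 0\<close>] A B by simp
    also have "a powr p = \<bar>fk x\<bar> powr (2 * p) / A powr p"
      unfolding a_def using A by (simp add: powr_divide power2_powr)
    also have "b powr q = \<bar>f x\<bar> powr q / B powr q"
      unfolding b_def using B f0 x by (simp add: powr_divide)
    also have "A * B * (\<bar>fk x\<bar> powr (2 * p) / A powr p / p + \<bar>f x\<bar> powr q / B powr q / q) = bd x"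
      unfolding bd_def by (simp add: field_simps)
    finally show ?thesis .
  qed
  then have int: "integrable M (\<lambda>x. f x * (fk x)\<^sup>2)"
    and le_bd: "(\<integral>x. f x * (fk x)\<^sup>2 \<partial>M) \<le> (\<integral>x. bd x \<partial>M)"
    using weighted_integral_le[OF fm f0 _ _ bd_int, of "\<lambda>x. (fk x)\<^sup>2"] fk_meas by auto
  show "integrable M (\<lambda>x. f x * (fk x)\<^sup>2)"
    by (rule int)
  have "(\<integral>x. bd x \<partial>M) = A * B * (I1 / (p * A powr p) + I2 / (q * B powr q))"
    unfolding bd_def I1_def I2_def using i1 i2 by (simp add: add_divide_distrib)
  also have "\<dots> \<le> A * B * (A powr p / (p * A powr p) + B powr q / (q * B powr q))"
    using I1 I2 A B p q1 by (intro mult_left_mono add_mono divide_right_mono) auto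
  also have "\<dots> = A * B * (1 / p + 1 / q)"
    using A B p q1 by simp
  also have "\<dots> = A * B"
    using pq by simp
  finally show "(\<integral>x. f x * (fk x)\<^sup>2 \<partial>M) \<le> A * B"
    using le_bd by linarith
qed

lemma weighted_square_integral_le_bounded_density:
  assumes fm: "f \<in> borel_measurable M" and f0: "\<forall>x\<in>space M. f x \<ge> 0" and fkL: "fk \<in> L2 M"
    and fc: "\<forall>x\<in>space M. f x \<le> c"
  shows "integrable M (\<lambda>x. f x * (fk x)\<^sup>2)" "(\<integral>x. f x * (fk x)\<^sup>2 \<partial>M) \<le> c * Dk M fk"
proof -
  have "integrable M (\<lambda>x. c * (fk x)\<^sup>2)"
    using L2_square_integrable[OF fkL] by simp
  moreover have "f x * (fk x)\<^sup>2 \<le> c * (fk x)\<^sup>2" if "x \<in> space M" for x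
    using fc that by (intro mult_right_mono) auto
  ultimately show "integrable M (\<lambda>x. f x * (fk x)\<^sup>2)" "(\<integral>x. f x * (fk x)\<^sup>2 \<partial>M) \<le> c * Dk M fk"
    using weighted_integral_le[OF fm f0, of "\<lambda>x. (fk x)\<^sup>2" "\<lambda>x. c * (fk x)\<^sup>2"] fkL
    unfolding L2_def Dk_def by auto
qed

lemma weighted_square_integral_le_bounded:
  assumes fm: "f \<in> borel_measurable M" and f0: "\<forall>x\<in>space M. f x \<ge> 0"
    and "prob_space (density M f)" and fkL: "fk \<in> L2 M"
    and fkK: "\<forall>x\<in>space M. (fk x)\<^sup>2 \<le> K"
  shows "integrable M (\<lambda>x. f x * (fk x)\<^sup>2)" "(\<integral>x. f x * (fk x)\<^sup>2 \<partial>M) \<le> K"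
proof -
  note f_int = prob_density_integral[OF fm f0 assms(3)]
  have "integrable M (\<lambda>x. K * f x)"
    using f_int by simp
  moreover have "f x * (fk x)\<^sup>2 \<le> K * f x" if "x \<in> space M" for x
  proof -
    have "f x * (fk x)\<^sup>2 \<le> f x * K"
      using fkK f0 that by (intro mult_left_mono) auto
    then show ?thesis
      by (simp add: mult.commute)
  qed
  ultimately show "integrable M (\<lambda>x. f x * (fk x)\<^sup>2)" "(\<integral>x. f x * (fk x)\<^sup>2 \<partial>M) \<le> K"
    using weighted_integral_le[OF fm f0, of "\<lambda>x. (fk x)\<^sup>2" "\<lambda>x. K * f x"] fkL f_int
    unfolding L2_def by auto
qed

lemma cond_H_second_moment:
  assumes H: "cond_H M f fs m p c cs" and "1 \<le> p" and k: "k \<in> {1..m}"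
    and fm: "f \<in> borel_measurable M" and f0: "\<forall>x\<in>space M. f x \<ge> 0"
    and P: "prob_space (density M f)" and fkL: "fs k \<in> L2 M" and D: "Dk M (fs k) > 0"
  shows "integrable (density M f) (\<lambda>z. (fs k z)\<^sup>2)"
    "(\<integral>z. (fs k z)\<^sup>2 \<partial>density M f) \<le> cs k * c * Dk M (fs k)"
proof -
  have "c > 0" "cs k > 0"
    using H k unfolding cond_H_def by auto
  have "integrable M (\<lambda>x. f x * (fs k x)\<^sup>2) \<and> (\<integral>x. f x * (fs k x)\<^sup>2 \<partial>M) \<le> cs k * c * Dk M (fs k)"
  proof (cases "p = 1")
    case True
    then have "\<forall>x\<in>space M. f x \<le> c" "cs k = 1"
      using H k unfolding cond_H_def by auto
    then show ?thesis
      using weighted_square_integral_le_bounded_density[OF fm f0 fkL] by simp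
  next
    case p_ne_1: False
    show ?thesis
    proof (cases "p = \<infinity>")
      case True
      then have "\<forall>x\<in>space M. \<bar>fs k x\<bar> \<le> sqrt (cs k * Dk M (fs k))" "c = 1"
        using H k p_ne_1 unfolding cond_H_def by auto
      then have "\<forall>x\<in>space M. (fs k x)\<^sup>2 \<le> cs k * Dk M (fs k)"
        using \<open>cs k > 0\<close> D by (metis abs_le_square_iff mult_pos_pos real_sqrt_abs real_sqrt_le_iff real_sqrt_pow2 less_imp_le)
      then show ?thesis
        using weighted_square_integral_le_bounded[OF fm f0 P fkL] \<open>c = 1\<close> by simp
    next
      case False
      then obtain r where r: "p = ereal r" "r > 1"
        using \<open>1 \<le> p\<close> p_ne_1 by (cases p) auto
      then show ?thesis
        using H k p_ne_1 False \<open>c > 0\<close> \<open>cs k > 0\<close> D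
          weighted_square_integral_le_Hoelder[OF fm f0 fkL \<open>r > 1\<close> refl, of "cs k * Dk M (fs k)" c]
        unfolding cond_H_def Let_def by (simp add: mult_ac)
    qed
  qed
  moreover have "AE x in M. 0 \<le> f x"
    using f0 by (intro AE_I2) auto
  moreover have "(\<lambda>z. (fs k z)\<^sup>2) \<in> borel_measurable M"
    using L2_measurable[OF fkL] by simp
  ultimately show "integrable (density M f) (\<lambda>z. (fs k z)\<^sup>2)"
    "(\<integral>z. (fs k z)\<^sup>2 \<partial>density M f) \<le> cs k * c * Dk M (fs k)"
    by (simp_all add: integrable_density[OF _ fm] integral_density[OF _ fm])
qed

lemma exp_diff_half_square_le: "exp (x - x\<^sup>2 / 2) \<le> 1 + x + x\<^sup>2 / (2::real)"
proof -
  define \<phi> \<phi>' where "\<phi> = (\<lambda>x::real. (1 + x + x\<^sup>2 / 2) * exp (x\<^sup>2 / 2 - x))"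
    and "\<phi>' = (\<lambda>x::real. x * (1 + x / 2 + x\<^sup>2 / 2) * exp (x\<^sup>2 / 2 - x))"
  have deriv: "(\<phi> has_real_derivative \<phi>' z) (at z)" for z
  proof -
    have "(\<phi> has_real_derivative
        (1 + z) * exp (z\<^sup>2 / 2 - z) + (1 + z + z\<^sup>2 / 2) * (exp (z\<^sup>2 / 2 - z) * (z - 1))) (at z)"
      unfolding \<phi>_def by (auto intro!: derivative_eq_intros)
    moreover have "(1 + z) * exp (z\<^sup>2 / 2 - z) + (1 + z + z\<^sup>2 / 2) * (exp (z\<^sup>2 / 2 - z) * (z - 1)) = \<phi>' z"
      unfolding \<phi>'_def by (simp add: algebra_simps power2_eq_square power3_eq_cube)
    ultimately show ?thesis
      by simp
  qed
  have "1 + z / 2 + z\<^sup>2 / 2 = ((z + 1 / 2)\<^sup>2 + 7 / 4) / 2" for z :: real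
    by (simp add: power2_eq_square field_simps)
  then have factor_pos: "1 + z / 2 + z\<^sup>2 / 2 > 0" for z :: real
    by (metis add_nonneg_pos divide_pos_pos zero_le_power2 zero_less_numeral)
  have cont: "continuous_on S \<phi>" for S
    using deriv by (meson DERIV_isCont continuous_at_imp_continuous_on)
  have "\<phi> 0 \<le> \<phi> x"
  proof (cases "x \<ge> 0")
    case True
    have "\<exists>y. DERIV \<phi> z :> y \<and> y \<ge> 0" if "0 < z" for z
      using deriv[of z] that factor_pos[of z] unfolding \<phi>'_def by auto
    then show ?thesis
      using True by (intro DERIV_nonneg_imp_increasing_open[OF _ _ cont]) auto
  next
    case False
    have "\<exists>y. DERIV \<phi> z :> y \<and> y \<le> 0" if "z < 0" for z
      using deriv[of z] that factor_pos[of z] unfolding \<phi>'_def by (auto simp: mult_nonpos_nonneg)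
    then show ?thesis
      using False by (intro DERIV_nonpos_imp_decreasing_open[OF _ _ cont]) auto
  qed
  then have "exp (x - x\<^sup>2 / 2) * 1 \<le> exp (x - x\<^sup>2 / 2) * ((1 + x + x\<^sup>2 / 2) * exp (x\<^sup>2 / 2 - x))"
    unfolding \<phi>_def by (intro mult_left_mono) auto
  also have "\<dots> = (1 + x + x\<^sup>2 / 2) * exp ((x - x\<^sup>2 / 2) + (x\<^sup>2 / 2 - x))"
    by (simp only: exp_add mult_ac)
  finally show ?thesis
    by simp
qed

lemma nn_integral_exp_centred_le_1:
  assumes P: "prob_space P" and Zm: "Z \<in> borel_measurable P" and Z2: "integrable P (\<lambda>z. (Z z)\<^sup>2)"
  shows "(\<integral>\<^sup>+ z. ennreal (exp (t * (Z z - (\<integral>z. Z z \<partial>P))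
            - t\<^sup>2 * ((Z z)\<^sup>2 + (\<integral>z. (Z z)\<^sup>2 \<partial>P)) / 2)) \<partial>P) \<le> 1"
proof -
  interpret P: prob_space P by fact
  define \<mu> where "\<mu> = (\<integral>z. Z z \<partial>P)"
  define e where "e = (\<integral>z. (Z z)\<^sup>2 \<partial>P)"
  have Z1: "integrable P Z" using P.square_integrable_imp_integrable[OF Zm Z2] .
  define c where "c = exp (- t * \<mu> - t\<^sup>2 * e / 2)"
  have c: "c > 0" unfolding c_def by simp
  have pointwise: "exp (t * (Z z - \<mu>) - t\<^sup>2 * ((Z z)\<^sup>2 + e) / 2) \<le> c * (1 + t * Z z + t\<^sup>2 * (Z z)\<^sup>2 / 2)" for z
  proof -
    have "exp (t * (Z z - \<mu>) - t\<^sup>2 * ((Z z)\<^sup>2 + e) / 2) = c * exp (t * Z z - (t * Z z)\<^sup>2 / 2)"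
      unfolding c_def by (simp add: exp_add[symmetric] power_mult_distrib algebra_simps)
    also have "\<dots> \<le> c * (1 + t * Z z + (t * Z z)\<^sup>2 / 2)"
      using exp_diff_half_square_le[of "t * Z z"] c by (intro mult_left_mono) auto
    finally show ?thesis by (simp add: power_mult_distrib)
  qed
  have bound_int: "integrable P (\<lambda>z. c * (1 + t * Z z + t\<^sup>2 * (Z z)\<^sup>2 / 2))"
    using Z1 Z2 by auto
  have bound_nonneg: "0 \<le> c * (1 + t * Z z + t\<^sup>2 * (Z z)\<^sup>2 / 2)" for z
  proof -
    have "1 + t * Z z + t\<^sup>2 * (Z z)\<^sup>2 / 2 = ((t * Z z + 1)\<^sup>2 + 1) / 2" by (simp add: power2_eq_square field_simps)
    also have "\<dots> \<ge> 0" by simp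
    finally show ?thesis using c by simp
  qed
  have "(\<integral>\<^sup>+ z. ennreal (exp (t * (Z z - \<mu>) - t\<^sup>2 * ((Z z)\<^sup>2 + e) / 2)) \<partial>P)
      \<le> (\<integral>\<^sup>+ z. ennreal (c * (1 + t * Z z + t\<^sup>2 * (Z z)\<^sup>2 / 2)) \<partial>P)"
    using pointwise by (intro nn_integral_mono) (simp add: ennreal_leI)
  also have "\<dots> = ennreal (\<integral>z. c * (1 + t * Z z + t\<^sup>2 * (Z z)\<^sup>2 / 2) \<partial>P)"
    using bound_int bound_nonneg by (intro nn_integral_eq_integral) auto
  also have "\<dots> \<le> ennreal 1"
  proof (rule ennreal_leI)
    have "(\<integral>z. c * (1 + t * Z z + t\<^sup>2 * (Z z)\<^sup>2 / 2) \<partial>P) = c * (1 + t * \<mu> + t\<^sup>2 * e / 2)"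
      using Z1 Z2 unfolding \<mu>_def e_def by (simp add: integral_add P.prob_space)
    also have "c * (1 + t * \<mu> + t\<^sup>2 * e / 2) \<le> c * exp (t * \<mu> + t\<^sup>2 * e / 2)"
      using c by (intro mult_left_mono) (auto simp: add.assoc exp_ge_add_one_self)
    also have "c * exp (t * \<mu> + t\<^sup>2 * e / 2) = 1" unfolding c_def by (simp add: exp_add[symmetric])
    finally show "(\<integral>z. c * (1 + t * Z z + t\<^sup>2 * (Z z)\<^sup>2 / 2) \<partial>P) \<le> 1" .
  qed
  finally show ?thesis unfolding \<mu>_def e_def by simp
qed

lemma nn_integral_exp_centred_sum_le_1:
  assumes P: "prob_space P" and Zm[measurable]: "Z \<in> borel_measurable P" and Z2: "integrable P (\<lambda>z. (Z z)\<^sup>2)"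
    and I: "finite I"
  shows "(\<integral>\<^sup>+ X. ennreal (exp (t * ((\<Sum>i\<in>I. Z (X i)) - real (card I) * (\<integral>z. Z z \<partial>P))
            - t\<^sup>2 * ((\<Sum>i\<in>I. (Z (X i))\<^sup>2) + real (card I) * (\<integral>z. (Z z)\<^sup>2 \<partial>P)) / 2)) \<partial>PiM I (\<lambda>_. P)) \<le> 1"
proof -
  interpret P: prob_space P by fact
  interpret PS: product_sigma_finite "\<lambda>_::'b. P"
    by (simp add: product_sigma_finite_def P.sigma_finite_measure_axioms)
  define \<mu> where "\<mu> = (\<integral>z. Z z \<partial>P)"
  define e where "e = (\<integral>z. (Z z)\<^sup>2 \<partial>P)"
  define F where "F = (\<lambda>z. t * Z z - t * \<mu> - (t\<^sup>2 / 2) * (Z z)\<^sup>2 - (t\<^sup>2 / 2) * e)"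
  have Fm[measurable]: "F \<in> borel_measurable P" unfolding F_def by measurable
  have sumF: "(\<Sum>i\<in>I. F (X i)) = t * ((\<Sum>i\<in>I. Z (X i)) - real (card I) * \<mu>)
            - t\<^sup>2 * ((\<Sum>i\<in>I. (Z (X i))\<^sup>2) + real (card I) * e) / 2" for X
  proof -
    have "(\<Sum>i\<in>I. F (X i)) = t * (\<Sum>i\<in>I. Z (X i)) - real (card I) * (t * \<mu>)
        - (t\<^sup>2 / 2) * (\<Sum>i\<in>I. (Z (X i))\<^sup>2) - real (card I) * ((t\<^sup>2 / 2) * e)"
      unfolding F_def by (simp add: sum_subtractf sum_distrib_left)
    then show ?thesis by (simp add: field_simps)
  qed
  have "(\<integral>\<^sup>+ X. ennreal (exp (t * ((\<Sum>i\<in>I. Z (X i)) - real (card I) * \<mu>)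
            - t\<^sup>2 * ((\<Sum>i\<in>I. (Z (X i))\<^sup>2) + real (card I) * e) / 2)) \<partial>PiM I (\<lambda>_. P))
      = (\<integral>\<^sup>+ X. (\<Prod>i\<in>I. ennreal (exp (F (X i)))) \<partial>PiM I (\<lambda>_. P))"
    by (simp add: sumF[symmetric] exp_sum[OF I] prod_ennreal)
  also have "\<dots> = (\<Prod>i\<in>I. (\<integral>\<^sup>+ z. ennreal (exp (F z)) \<partial>P))"
    by (rule PS.product_nn_integral_prod[OF I]) measurable
  also have "\<dots> \<le> (\<Prod>i\<in>I. (1::ennreal))"
  proof (rule prod_mono_ennreal)
    fix i assume "i \<in> I"
    have "(\<integral>\<^sup>+ z. ennreal (exp (F z)) \<partial>P) \<le> 1"
    proof -
      have "F = (\<lambda>z. t * (Z z - \<mu>) - t\<^sup>2 * ((Z z)\<^sup>2 + e) / 2)" unfolding F_def by (simp add: fun_eq_iff field_simps)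
      then show ?thesis unfolding \<mu>_def e_def using nn_integral_exp_centred_le_1[OF P Zm Z2] by simp
    qed
    then show "(\<integral>\<^sup>+ z. ennreal (exp (F z)) \<partial>P) \<le> 1" by simp
  qed
  also have "\<dots> = 1" by simp
  finally show ?thesis unfolding \<mu>_def e_def .
qed

lemma normal_density_inverse_sqrt:
  "a > 0 \<Longrightarrow> normal_density m (1 / sqrt a) t = sqrt (a / (2 * pi)) * exp (- (t - m)\<^sup>2 * a / 2)"
  unfolding normal_density_def by (simp add: power_divide real_sqrt_divide field_simps)

lemma nn_integral_normal_density: "\<sigma> > 0 \<Longrightarrow> (\<integral>\<^sup>+ t. ennreal (normal_density \<mu> \<sigma> t) \<partial>lborel) = 1"
  using nn_integral_eq_integral[OF integrable_normal_density[of \<sigma> \<mu>]] integral_normal_density[of \<sigma> \<mu>]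
  by simp

lemma nn_integral_exp_quadratic_normal_density:
  assumes V: "V \<ge> 0" and y: "y > 0"
  shows "(\<integral>\<^sup>+ t. ennreal (exp (t * S - t\<^sup>2 * V / 2) * normal_density 0 (1 / sqrt y) t) \<partial>lborel)
       = ennreal (sqrt (y / (V + y)) * exp (S\<^sup>2 / (2 * (V + y))))"
proof -
  define W where "W = V + y"
  have W: "W > 0" unfolding W_def using V y by simp
  define K where "K = sqrt (y / W) * exp (S\<^sup>2 / (2 * W))"
  have K: "K \<ge> 0" unfolding K_def using W y by simp
  have completed_square: "exp (t * S - t\<^sup>2 * V / 2) * normal_density 0 (1 / sqrt y) t
      = K * normal_density (S / W) (1 / sqrt W) t" for t
  proof -
    have e1: "t * S - t\<^sup>2 * V / 2 + (- (t - 0)\<^sup>2 * y / 2) = t * S - t\<^sup>2 * W / 2"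
      unfolding W_def by (simp add: algebra_simps)
    have "(t - S / W)\<^sup>2 * W = t\<^sup>2 * W - 2 * t * S + S\<^sup>2 / W"
      using W by (simp add: field_simps power2_eq_square)
    then have e2: "S\<^sup>2 / (2 * W) + (- (t - S / W)\<^sup>2 * W / 2) = t * S - t\<^sup>2 * W / 2"
      by (simp add: field_simps)
    have e: "t * S - t\<^sup>2 * V / 2 + (- (t - 0)\<^sup>2 * y / 2) = S\<^sup>2 / (2 * W) + (- (t - S / W)\<^sup>2 * W / 2)"
      using e1 e2 by simp
    have c: "sqrt (y / (2 * pi)) = sqrt (y / W) * sqrt (W / (2 * pi))"
      using W by (simp add: real_sqrt_mult[symmetric])
    show ?thesis unfolding normal_density_inverse_sqrt[OF y] normal_density_inverse_sqrt[OF W] K_def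
      using e c by (simp add: exp_add[symmetric] algebra_simps)
  qed
  have "(\<integral>\<^sup>+ t. ennreal (exp (t * S - t\<^sup>2 * V / 2) * normal_density 0 (1 / sqrt y) t) \<partial>lborel)
      = (\<integral>\<^sup>+ t. ennreal K * ennreal (normal_density (S / W) (1 / sqrt W) t) \<partial>lborel)"
    using K by (simp add: completed_square ennreal_mult normal_density_nonneg)
  also have "\<dots> = ennreal K * (\<integral>\<^sup>+ t. ennreal (normal_density (S / W) (1 / sqrt W) t) \<partial>lborel)"
    by (rule nn_integral_cmult) measurable
  also have "(\<integral>\<^sup>+ t. ennreal (normal_density (S / W) (1 / sqrt W) t) \<partial>lborel) = 1"
    using W by (simp add: nn_integral_normal_density)
  finally show ?thesis unfolding K_def W_def by simp
qed

lemma nn_integral_gaussian_mixture_le_1: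
  assumes Q: "prob_space Q" and Sm[measurable]: "S \<in> borel_measurable Q" and Vm[measurable]: "V \<in> borel_measurable Q"
    and V0: "\<And>X. X \<in> space Q \<Longrightarrow> V X \<ge> 0" and y: "y > 0"
    and H: "\<And>t. (\<integral>\<^sup>+ X. ennreal (exp (t * S X - t\<^sup>2 * V X / 2)) \<partial>Q) \<le> 1"
  shows "(\<integral>\<^sup>+ X. ennreal (sqrt (y / (V X + y)) * exp ((S X)\<^sup>2 / (2 * (V X + y)))) \<partial>Q) \<le> 1"
proof -
  interpret Q: prob_space Q by fact
  interpret LQ: pair_sigma_finite lborel Q
    by (simp add: pair_sigma_finite_def lborel.sigma_finite_measure_axioms Q.sigma_finite_measure_axioms)
  define nd where "nd = normal_density 0 (1 / sqrt y)"
  have nd0: "nd t \<ge> 0" for t unfolding nd_def by (simp add: normal_density_nonneg)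
  have "(\<integral>\<^sup>+ X. ennreal (sqrt (y / (V X + y)) * exp ((S X)\<^sup>2 / (2 * (V X + y)))) \<partial>Q)
      = (\<integral>\<^sup>+ X. (\<integral>\<^sup>+ t. ennreal (exp (t * S X - t\<^sup>2 * V X / 2) * nd t) \<partial>lborel) \<partial>Q)"
    by (rule nn_integral_cong) (simp add: nn_integral_exp_quadratic_normal_density V0 y nd_def)
  also have "\<dots> = (\<integral>\<^sup>+ t. (\<integral>\<^sup>+ X. ennreal (exp (t * S X - t\<^sup>2 * V X / 2) * nd t) \<partial>Q) \<partial>lborel)"
    unfolding nd_def by (rule LQ.Fubini') measurable
  also have "\<dots> \<le> (\<integral>\<^sup>+ t. ennreal (nd t) \<partial>lborel)"
  proof (rule nn_integral_mono)
    fix t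
    have "(\<integral>\<^sup>+ X. ennreal (exp (t * S X - t\<^sup>2 * V X / 2) * nd t) \<partial>Q)
        = (\<integral>\<^sup>+ X. ennreal (nd t) * ennreal (exp (t * S X - t\<^sup>2 * V X / 2)) \<partial>Q)"
      using nd0[of t] by (simp add: ennreal_mult mult.commute)
    also have "\<dots> = ennreal (nd t) * (\<integral>\<^sup>+ X. ennreal (exp (t * S X - t\<^sup>2 * V X / 2)) \<partial>Q)"
      by (rule nn_integral_cmult) measurable
    also have "\<dots> \<le> ennreal (nd t) * 1" using H[of t] by (intro mult_left_mono) auto
    finally show "(\<integral>\<^sup>+ X. ennreal (exp (t * S X - t\<^sup>2 * V X / 2) * nd t) \<partial>Q) \<le> ennreal (nd t)" by simp
  qed
  also have "(\<integral>\<^sup>+ t. ennreal (nd t) \<partial>lborel) = 1"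
    unfolding nd_def using y by (simp add: nn_integral_normal_density)
  finally show ?thesis .
qed

lemma exp_le_gaussian_mixture_plus_ratio:
  assumes W: "W > 0" and y: "y > 0" and L: "3 * L * W \<le> S\<^sup>2"
  shows "exp L \<le> (2/3) * (sqrt (y / W) * exp (S\<^sup>2 / (2 * W))) + (1/3) * (W / y)"
proof -
  define G where "G = sqrt (y / W) * exp (S\<^sup>2 / (2 * W))"
  have "G > 0" "W / y > 0"
    unfolding G_def using W y by simp_all
  have "exp L \<le> exp (S\<^sup>2 / (3 * W))"
    using L W by (simp add: pos_le_divide_eq)
  also have "S\<^sup>2 / (3 * W) = (2/3) * ln G + (1/3) * ln (W / y)"
    unfolding G_def using W y by (simp add: ln_mult ln_sqrt ln_div field_simps)
  also have "exp \<dots> = G powr (2/3) * (W / y) powr (1/3)"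
    using \<open>G > 0\<close> \<open>W / y > 0\<close> W y by (simp add: powr_def exp_add)
  also have "\<dots> \<le> (2/3) * G + (1/3) * (W / y)"
    using Youngs_inequality_0[of "2/3" "1/3" G "W / y"] \<open>G > 0\<close> \<open>W / y > 0\<close> by simp
  finally show ?thesis
    unfolding G_def .
qed

lemma integral_PiM_sum_component:
  fixes g :: "'a \<Rightarrow> real"
  assumes P: "prob_space P" and I: "finite I" and g: "integrable P g"
  shows "integrable (PiM I (\<lambda>_. P)) (\<lambda>X. \<Sum>i\<in>I. g (X i))"
    "(\<integral>X. (\<Sum>i\<in>I. g (X i)) \<partial>PiM I (\<lambda>_. P)) = real (card I) * (\<integral>z. g z \<partial>P)"
proof -
  have component: "integrable (PiM I (\<lambda>_. P)) (\<lambda>X. g (X i))"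
    "(\<integral>X. g (X i) \<partial>PiM I (\<lambda>_. P)) = (\<integral>z. g z \<partial>P)" if i: "i \<in> I" for i
  proof -
    have distr: "distr (PiM I (\<lambda>_. P)) P (\<lambda>X. X i) = P"
      using distr_PiM_component[of I "\<lambda>_. P" i] i P by simp
    have meas: "(\<lambda>X. X i) \<in> measurable (PiM I (\<lambda>_. P)) P"
      using i by measurable
    show "integrable (PiM I (\<lambda>_. P)) (\<lambda>X. g (X i))"
      using integrable_distr_eq[OF meas, of g] distr g by simp
    show "(\<integral>X. g (X i) \<partial>PiM I (\<lambda>_. P)) = (\<integral>z. g z \<partial>P)"
      using integral_distr[OF meas, of g] distr g by simp
  qed
  then show "integrable (PiM I (\<lambda>_. P)) (\<lambda>X. \<Sum>i\<in>I. g (X i))"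
    by auto
  show "(\<integral>X. (\<Sum>i\<in>I. g (X i)) \<partial>PiM I (\<lambda>_. P)) = real (card I) * (\<integral>z. g z \<partial>P)"
    using component by (simp add: Bochner_Integration.integral_sum)
qed

lemma integral_le_of_nn_integral_le:
  fixes G :: "'a \<Rightarrow> real"
  assumes "G \<in> borel_measurable Q" "\<And>X. G X \<ge> 0" "(\<integral>\<^sup>+ X. ennreal (G X) \<partial>Q) \<le> ennreal c"
    and "c \<ge> 0"
  shows "integrable Q G" "(\<integral>X. G X \<partial>Q) \<le> c"
proof -
  have "(\<integral>\<^sup>+ X. ennreal (G X) \<partial>Q) < \<infinity>"
    using assms(3) by (simp add: le_less_trans)
  then show int: "integrable Q G"
    using assms(1,2) by (intro integrableI_nonneg) auto
  have "ennreal (\<integral>X. G X \<partial>Q) \<le> ennreal c"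
    using nn_integral_eq_integral[OF int] assms(2,3) by simp
  moreover have "(\<integral>X. G X \<partial>Q) \<ge> 0"
    using assms(2) by simp
  ultimately show "(\<integral>X. G X \<partial>Q) \<le> c"
    using \<open>c \<ge> 0\<close> by simp
qed

lemma self_normalized_mixture_integral_le_1:
  fixes P :: "'a measure" and Z :: "'a \<Rightarrow> real"
  assumes P: "prob_space P" and Zm[measurable]: "Z \<in> borel_measurable P"
    and Z2: "integrable P (\<lambda>z. (Z z)\<^sup>2)" and I: "finite I" and y: "y > 0"
  defines "S \<equiv> \<lambda>X. (\<Sum>i\<in>I. Z (X i)) - real (card I) * (\<integral>z. Z z \<partial>P)"
    and "V \<equiv> \<lambda>X. (\<Sum>i\<in>I. (Z (X i))\<^sup>2) + real (card I) * (\<integral>z. (Z z)\<^sup>2 \<partial>P)"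
  shows "integrable (PiM I (\<lambda>_. P)) (\<lambda>X. sqrt (y / (V X + y)) * exp ((S X)\<^sup>2 / (2 * (V X + y))))"
    and "(\<integral>X. sqrt (y / (V X + y)) * exp ((S X)\<^sup>2 / (2 * (V X + y))) \<partial>PiM I (\<lambda>_. P)) \<le> 1"
proof -
  interpret Q: prob_space "PiM I (\<lambda>_. P)"
    by (rule prob_space_PiM) (simp add: P)
  have S_meas[measurable]: "S \<in> borel_measurable (PiM I (\<lambda>_. P))"
    and V_meas[measurable]: "V \<in> borel_measurable (PiM I (\<lambda>_. P))"
    unfolding S_def V_def by measurable
  have V_nonneg: "V X \<ge> 0" for X
    unfolding V_def by (simp add: sum_nonneg)
  define G where "G = (\<lambda>X. sqrt (y / (V X + y)) * exp ((S X)\<^sup>2 / (2 * (V X + y))))"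
  have G_meas: "G \<in> borel_measurable (PiM I (\<lambda>_. P))"
    unfolding G_def by measurable
  have G_nonneg: "G X \<ge> 0" for X
    unfolding G_def using V_nonneg[of X] y by simp
  have "(\<integral>\<^sup>+ X. ennreal (exp (t * S X - t\<^sup>2 * V X / 2)) \<partial>PiM I (\<lambda>_. P)) \<le> 1" for t
    using nn_integral_exp_centred_sum_le_1[OF P Zm Z2 I, of t] unfolding S_def V_def by simp
  then have "(\<integral>\<^sup>+ X. ennreal (G X) \<partial>PiM I (\<lambda>_. P)) \<le> ennreal 1"
    unfolding G_def ennreal_1
    by (rule nn_integral_gaussian_mixture_le_1[OF Q.prob_space_axioms S_meas V_meas V_nonneg y])
  from integral_le_of_nn_integral_le[OF G_meas G_nonneg this zero_le_one]
  have "integrable (PiM I (\<lambda>_. P)) G \<and> (\<integral>X. G X \<partial>PiM I (\<lambda>_. P)) \<le> 1"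
    by blast
  then show "integrable (PiM I (\<lambda>_. P)) (\<lambda>X. sqrt (y / (V X + y)) * exp ((S X)\<^sup>2 / (2 * (V X + y))))"
    and "(\<integral>X. sqrt (y / (V X + y)) * exp ((S X)\<^sup>2 / (2 * (V X + y))) \<partial>PiM I (\<lambda>_. P)) \<le> 1"
    unfolding G_def by simp_all
qed

text \<open>Markov's inequality applied to a convex combination of the mixture and of \<open>(V + y) / y\<close>.\<close>
lemma mixture_tail_measure_le:
  fixes S V :: "'b \<Rightarrow> real"
  assumes "prob_space Q" and [measurable]: "S \<in> borel_measurable Q" "V \<in> borel_measurable Q"
    and V: "\<And>X. V X \<ge> 0" "integrable Q V" "(\<integral>X. V X \<partial>Q) \<le> 6 * y" and y: "y > 0"
    and G: "integrable Q (\<lambda>X. sqrt (y / (V X + y)) * exp ((S X)\<^sup>2 / (2 * (V X + y))))"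
      "(\<integral>X. sqrt (y / (V X + y)) * exp ((S X)\<^sup>2 / (2 * (V X + y))) \<partial>Q) \<le> 1"
  shows "measure Q {X \<in> space Q. 3 * L * (V X + y) \<le> (S X)\<^sup>2} \<le> 3 * exp (- L)"
proof -
  interpret Q: prob_space Q by fact
  define G where "G = (\<lambda>X. sqrt (y / (V X + y)) * exp ((S X)\<^sup>2 / (2 * (V X + y))))"
  define F where "F = (\<lambda>X. (2/3) * G X + (1/3) * ((V X + y) / y))"
  have F_int: "integrable Q F"
    unfolding F_def G_def using G(1) V(2) by simp
  have "(\<integral>X. F X \<partial>Q) = (2/3) * (\<integral>X. G X \<partial>Q) + (1/3) * (((\<integral>X. V X \<partial>Q) + y) / y)"
    unfolding F_def G_def using G(1) V(2) y by (simp add: Q.prob_space add_divide_distrib)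
  also have "\<dots> \<le> (2/3) * 1 + (1/3) * 7"
  proof (intro add_mono mult_left_mono)
    show "(\<integral>X. G X \<partial>Q) \<le> 1"
      using G(2) unfolding G_def .
    show "((\<integral>X. V X \<partial>Q) + y) / y \<le> 7"
      using V(3) y by (simp add: pos_divide_le_eq)
  qed auto
  finally have F_le: "(\<integral>X. F X \<partial>Q) \<le> 3"
    by simp
  have "{X \<in> space Q. 3 * L * (V X + y) \<le> (S X)\<^sup>2} \<subseteq> {X \<in> space Q. exp L \<le> F X}"
  proof (intro subsetI CollectI conjI; elim CollectE conjE)
    fix X
    assume "X \<in> space Q" and "3 * L * (V X + y) \<le> (S X)\<^sup>2"
    then show "X \<in> space Q" and "exp L \<le> F X"
      unfolding F_def G_def using exp_le_gaussian_mixture_plus_ratio[of "V X + y" y L "S X"] V(1)[of X] y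
      by simp_all
  qed
  moreover have "F \<in> borel_measurable Q"
    unfolding F_def G_def by measurable
  ultimately have "measure Q {X \<in> space Q. 3 * L * (V X + y) \<le> (S X)\<^sup>2}
      \<le> measure Q {X \<in> space Q. exp L \<le> F X}"
    by (intro Q.finite_measure_mono) auto
  also have "\<dots> \<le> (\<integral>X. F X \<partial>Q) / exp L"
    using F_int V(1) y unfolding F_def G_def
    by (intro integral_Markov_inequality_measure[where A = "space Q"]) auto
  also have "\<dots> \<le> 3 * exp (- L)"
    using F_le by (simp add: exp_minus divide_right_mono flip: divide_inverse)
  finally show ?thesis .
qed

definition deviation_event ::
    "'a measure \<Rightarrow> ('a \<Rightarrow> real) \<Rightarrow> nat \<Rightarrow> real \<Rightarrow> real \<Rightarrow> (nat \<Rightarrow> 'a) set" where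
  "deviation_event P Z N L w = {X \<in> space (PiM {1..N} (\<lambda>_. P)).
     ((\<Sum>i\<in>{1..N}. Z (X i)) - real N * (\<integral>z. Z z \<partial>P))\<^sup>2
       > 4 * L * ((\<Sum>i\<in>{1..N}. (Z (X i))\<^sup>2) + real N * w)}"

lemma deviation_event_sets:
  assumes [measurable]: "Z \<in> borel_measurable P"
  shows "deviation_event P Z N L w \<in> sets (PiM {1..N} (\<lambda>_. P))"
  unfolding deviation_event_def by measurable

lemma deviation_event_measure_le:
  fixes P :: "'a measure" and Z :: "'a \<Rightarrow> real"
  assumes P: "prob_space P" and Zm[measurable]: "Z \<in> borel_measurable P"
    and Z2: "integrable P (\<lambda>z. (Z z)\<^sup>2)"
    and N: "N \<ge> 1" and ew: "(\<integral>z. (Z z)\<^sup>2 \<partial>P) \<le> w" and w: "w > 0" and L: "L \<ge> 0"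
  shows "measure (PiM {1..N} (\<lambda>_. P)) (deviation_event P Z N L w) \<le> 3 * exp (- L)"
proof -
  define Q where "Q = PiM {1..N} (\<lambda>_. P)"
  interpret Q: prob_space Q
    unfolding Q_def by (rule prob_space_PiM) (simp add: P)
  define e where "e = (\<integral>z. (Z z)\<^sup>2 \<partial>P)"
  define S where "S = (\<lambda>X. (\<Sum>i\<in>{1..N}. Z (X i)) - real N * (\<integral>z. Z z \<partial>P))"
  define SQ where "SQ = (\<lambda>X. \<Sum>i\<in>{1..N}. (Z (X i))\<^sup>2)"
  define y where "y = real N * w / 3"
  have [measurable]: "S \<in> borel_measurable Q" "SQ \<in> borel_measurable Q"
    unfolding S_def SQ_def Q_def by measurable
  have "e \<ge> 0" "y > 0" "real N * e \<le> real N * w"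
    unfolding e_def y_def using N w ew by (simp_all add: mult_left_mono)
  have SQ: "integrable Q SQ" "(\<integral>X. SQ X \<partial>Q) = real N * e"
    using integral_PiM_sum_component[OF P _ Z2, of "{1..N}"] unfolding SQ_def Q_def e_def by simp_all
  have SQ_nonneg: "SQ X \<ge> 0" for X
    unfolding SQ_def by (simp add: sum_nonneg)
  have "deviation_event P Z N L w \<subseteq> {X \<in> space Q. 3 * L * (SQ X + real N * e + y) \<le> (S X)\<^sup>2}"
  proof
    fix X
    assume "X \<in> deviation_event P Z N L w"
    then have "X \<in> space Q" and dev: "4 * L * (SQ X + real N * w) < (S X)\<^sup>2"
      unfolding deviation_event_def Q_def S_def SQ_def by auto
    have "3 * (SQ X + real N * e + y) \<le> 4 * (SQ X + real N * w)"
      using \<open>real N * e \<le> real N * w\<close> SQ_nonneg[of X] unfolding y_def by (simp add: field_simps)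
    then have "L * (3 * (SQ X + real N * e + y)) \<le> L * (4 * (SQ X + real N * w))"
      using L by (rule mult_left_mono)
    then have "3 * L * (SQ X + real N * e + y) \<le> 4 * L * (SQ X + real N * w)"
      by (simp only: mult_ac)
    then show "X \<in> {X \<in> space Q. 3 * L * (SQ X + real N * e + y) \<le> (S X)\<^sup>2}"
      using \<open>X \<in> space Q\<close> dev by simp
  qed
  then have "measure Q (deviation_event P Z N L w)
      \<le> measure Q {X \<in> space Q. 3 * L * (SQ X + real N * e + y) \<le> (S X)\<^sup>2}"
    by (intro Q.finite_measure_mono) auto
  also have "\<dots> \<le> 3 * exp (- L)"
  proof (rule mixture_tail_measure_le[OF Q.prob_space_axioms, where V = "\<lambda>X. SQ X + real N * e"])
    show "(\<integral>X. SQ X + real N * e \<partial>Q) \<le> 6 * y"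
      using SQ \<open>real N * e \<le> real N * w\<close> unfolding y_def by (simp add: Q.prob_space mult.commute)
    show "integrable Q (\<lambda>X. sqrt (y / (SQ X + real N * e + y)) * exp ((S X)\<^sup>2 / (2 * (SQ X + real N * e + y))))"
      and "(\<integral>X. sqrt (y / (SQ X + real N * e + y)) * exp ((S X)\<^sup>2 / (2 * (SQ X + real N * e + y))) \<partial>Q) \<le> 1"
      using self_normalized_mixture_integral_le_1[OF P Zm Z2 _ \<open>y > 0\<close>, of "{1..N}"]
      unfolding S_def SQ_def Q_def e_def by simp_all
  qed (use SQ SQ_nonneg \<open>e \<ge> 0\<close> \<open>y > 0\<close> in auto)
  finally show ?thesis
    unfolding Q_def .
qed

lemma beta_nonneg:
  assumes "Dk M fk > 0" "Ck \<ge> 0" "1 + ln (2 * real m / eps) \<ge> 0"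
  shows "beta M fk m Ck eps N X \<ge> 0"
  using assms unfolding beta_def by (simp add: sum_nonneg)

lemma alpha_hat_deviation_le_beta_iff:
  assumes D: "Dk M fk > 0" and N: "N \<ge> 1"
  shows "(alpha_hat M fk N X - line_coeff M fk f)\<^sup>2 * Dk M fk \<le> beta M fk m Ck eps N X \<longleftrightarrow>
    ((\<Sum>i\<in>{1..N}. fk (X i)) - real N * (\<integral>y. f y * fk y \<partial>M))\<^sup>2
      \<le> 4 * (1 + ln (2 * real m / eps)) * ((\<Sum>i\<in>{1..N}. (fk (X i))\<^sup>2) + real N * (Ck * Dk M fk))"
proof -
  define T Qs \<mu> L D where "T = (\<Sum>i\<in>{1..N}. fk (X i))" and "Qs = (\<Sum>i\<in>{1..N}. (fk (X i))\<^sup>2)"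
    and "\<mu> = (\<integral>y. f y * fk y \<partial>M)" and "L = 1 + ln (2 * real m / eps)" and "D = Dk M fk"
  have "D > 0" "real N > 0"
    using assms unfolding D_def by simp_all
  have centre: "alpha_hat M fk N X - line_coeff M fk f = (T - real N * \<mu>) / (real N * D)"
    unfolding alpha_hat_def line_coeff_def T_def \<mu>_def D_def[symmetric]
    using \<open>D > 0\<close> \<open>real N > 0\<close> by (simp add: field_simps)
  have lhs: "(alpha_hat M fk N X - line_coeff M fk f)\<^sup>2 * D = (T - real N * \<mu>)\<^sup>2 / ((real N)\<^sup>2 * D)"
    unfolding centre using \<open>D > 0\<close> \<open>real N > 0\<close> by (simp add: power2_eq_square field_simps)
  have "(real N)\<^sup>2 * D > 0"
    using \<open>D > 0\<close> \<open>real N > 0\<close> by simp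
  have rhs: "beta M fk m Ck eps N X = 4 * L * (Qs + real N * (Ck * D)) / ((real N)\<^sup>2 * D)"
    unfolding beta_def L_def Qs_def D_def[symmetric]
    using \<open>D > 0\<close> \<open>real N > 0\<close> by (simp add: power2_eq_square field_simps)
  show ?thesis
    unfolding D_def[symmetric] T_def[symmetric] Qs_def[symmetric] \<mu>_def[symmetric] L_def[symmetric]
      lhs rhs
    using \<open>(real N)\<^sup>2 * D > 0\<close> by (simp add: divide_le_cancel)
qed

lemma projection_inequality_iff_not_deviation:
  assumes fm: "f \<in> borel_measurable M" and f0: "\<forall>x\<in>space M. f x \<ge> 0" and fL: "f \<in> L2 M"
    and N: "N \<ge> 1" and fkL: "fk \<in> L2 M" and D: "Dk M fk > 0" and "Ck \<ge> 0"
    and L: "1 + ln (2 * real m / eps) \<ge> 0"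
    and X: "X \<in> space (PiM {1..N} (\<lambda>_. density M f))"
  shows "(\<forall>g\<in>L2 M. d2 M (metric_proj M (CR M fk m Ck eps N X) g) f
            \<le> d2 M g f - d2 M (metric_proj M (CR M fk m Ck eps N X) g) g)
    \<longleftrightarrow> X \<notin> deviation_event (density M f) fk N (1 + ln (2 * real m / eps)) (Ck * Dk M fk)"
proof -
  have "(\<integral>z. fk z \<partial>density M f) = (\<integral>y. f y * fk y \<partial>M)"
    using integral_density[OF L2_measurable[OF fkL] fm] f0 by (simp add: AE_I2)
  then show ?thesis
    unfolding CR_eq_slab
      projection_inequality_iff_mem_slab[OF fkL D beta_nonneg[OF D \<open>Ck \<ge> 0\<close> L] fL]
    using fL X alpha_hat_deviation_le_beta_iff[OF D N] unfolding slab_def deviation_event_def by auto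
qed

lemma confidence_level_pos:
  assumes "m \<ge> 1" "0 < eps" "eps < 1"
  shows "1 + ln (2 * real m / eps) > 0"
proof -
  have "2 * real m / eps > 1"
    using assms by (simp add: field_simps)
  then have "ln (2 * real m / eps) > 0"
    by (rule ln_gt_zero)
  then show ?thesis
    by simp
qed

lemma union_bound_level_le:
  assumes "eps > 0"
  shows "real m * (3 * exp (- (1 + ln (2 * real m / eps)))) \<le> eps"
proof (cases "m = 0")
  case False
  have "exp (- (1 + ln (2 * real m / eps))) = exp (- 1) * (eps / (2 * real m))"
    using False assms by (simp add: exp_diff exp_minus field_simps)
  also have "\<dots> \<le> (1 / 2) * (eps / (2 * real m))"
    using exp_ge_add_one_self[of 1] assms by (intro mult_right_mono) (auto simp: exp_minus field_simps)
  finally have "real m * (3 * exp (- (1 + ln (2 * real m / eps)))) \<le> real m * (3 * ((1 / 2) * (eps / (2 * real m))))"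
    by (intro mult_left_mono) auto
  also have "\<dots> \<le> eps"
    using False assms by (simp add: field_simps)
  finally show ?thesis .
qed (use assms in simp)

lemma confidence_region_failure_event:
  assumes fm: "f \<in> borel_measurable M" and f0: "\<forall>x\<in>space M. f x \<ge> 0"
    and P: "prob_space (density M f)" and fL: "f \<in> L2 M" and N: "N \<ge> 1"
    and H: "cond_H M f fs m p c cs" "1 \<le> p" and k: "k \<in> {1..m}"
    and fk: "fs k \<in> L2 M" "Dk M (fs k) > 0" and eps: "0 < eps" "eps < 1"
  defines "B \<equiv> deviation_event (density M f) (fs k) N (1 + ln (2 * real m / eps)) (cs k * c * Dk M (fs k))"
  shows "B \<in> sets (PiM {1..N} (\<lambda>_. density M f))"
    and "measure (PiM {1..N} (\<lambda>_. density M f)) B \<le> 3 * exp (- (1 + ln (2 * real m / eps)))"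
    and "X \<in> space (PiM {1..N} (\<lambda>_. density M f)) \<Longrightarrow>
      (\<forall>g\<in>L2 M. d2 M (metric_proj M (CR M (fs k) m (cs k * c) eps N X) g) f
          \<le> d2 M g f - d2 M (metric_proj M (CR M (fs k) m (cs k * c) eps N X) g) g) \<longleftrightarrow> X \<notin> B"
proof -
  have "cs k * c > 0"
    using H k unfolding cond_H_def by auto
  have L: "1 + ln (2 * real m / eps) > 0"
    using confidence_level_pos[of m eps] k eps by simp
  have fk_meas: "fs k \<in> borel_measurable (density M f)"
    using L2_measurable[OF fk(1)] by simp
  then show "B \<in> sets (PiM {1..N} (\<lambda>_. density M f))"
    unfolding B_def by (rule deviation_event_sets)
  note moment = cond_H_second_moment[OF H k fm f0 P fk]
  have "cs k * c * Dk M (fs k) > 0"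
    using \<open>cs k * c > 0\<close> fk(2) by simp
  then show "measure (PiM {1..N} (\<lambda>_. density M f)) B \<le> 3 * exp (- (1 + ln (2 * real m / eps)))"
    unfolding B_def by (rule deviation_event_measure_le[OF P fk_meas moment(1) N moment(2) _ less_imp_le[OF L]])
  show "X \<in> space (PiM {1..N} (\<lambda>_. density M f)) \<Longrightarrow>
      (\<forall>g\<in>L2 M. d2 M (metric_proj M (CR M (fs k) m (cs k * c) eps N X) g) f
          \<le> d2 M g f - d2 M (metric_proj M (CR M (fs k) m (cs k * c) eps N X) g) g) \<longleftrightarrow> X \<notin> B"
    using projection_inequality_iff_not_deviation[OF fm f0 fL N fk] \<open>cs k * c > 0\<close> L
    unfolding B_def by simp
qed

theorem corollary3:
  fixes M :: "'a measure" and f :: "'a \<Rightarrow> real" and fs :: "nat \<Rightarrow> 'a \<Rightarrow> real"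
    and N m :: nat and p :: ereal and c eps :: real and cs :: "nat \<Rightarrow> real"
  assumes "sigma_finite_measure M"
    and "f \<in> borel_measurable M" and "\<forall>x\<in>space M. f x \<ge> 0"
    and "prob_space (density M f)"
    and "f \<in> L2 M"
    and "N \<ge> 1"
    and "\<forall>k\<in>{1..m}. fs k \<in> L2 M \<and> Dk M (fs k) > 0"
    and "1 \<le> p"
    and "cond_H M f fs m p c cs"
    and "eps > 0"
  shows "measure (PiM {1..N} (\<lambda>_. density M f))
           {X \<in> space (PiM {1..N} (\<lambda>_. density M f)).
              \<forall>k\<in>{1..m}. \<forall>g\<in>L2 M.
                d2 M (metric_proj M (CR M (fs k) m (cs k * c) eps N X) g) f
                  \<le> d2 M g f - d2 M (metric_proj M (CR M (fs k) m (cs k * c) eps N X) g) g}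
         \<ge> 1 - eps"
  (is "measure ?Q ?good \<ge> _")
proof (cases "eps < 1")
  case False
  then show ?thesis
    using measure_nonneg[of ?Q ?good] by linarith
next
  case True
  interpret Q: prob_space ?Q
    using assms(4) by (rule prob_space_PiM)
  define L where "L = 1 + ln (2 * real m / eps)"
  define bad where "bad k = deviation_event (density M f) (fs k) N L (cs k * c * Dk M (fs k))" for k
  have fs: "fs k \<in> L2 M" "Dk M (fs k) > 0" if "k \<in> {1..m}" for k
    using assms(7) that by auto
  note bad = confidence_region_failure_event[OF assms(2-6,9,8) _ fs assms(10) True,
      folded L_def, folded bad_def]
  have "?good = {X \<in> space ?Q. \<forall>k\<in>{1..m}. X \<notin> bad k}"
    by (intro Collect_cong conj_cong[OF refl] ball_cong[OF refl]) (rule bad(3); assumption)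
  then have good_eq: "?good = space ?Q - (\<Union>k\<in>{1..m}. bad k)"
    by blast
  have "measure ?Q (\<Union>k\<in>{1..m}. bad k) \<le> (\<Sum>k\<in>{1..m}. measure ?Q (bad k))"
    using bad(1) by (intro Q.finite_measure_subadditive_finite) auto
  also have "\<dots> \<le> real m * (3 * exp (- L))"
    using bad(2) sum_bounded_above[of "{1..m}" "\<lambda>k. measure ?Q (bad k)" "3 * exp (- L)"] by simp
  also have "\<dots> \<le> eps"
    unfolding L_def by (rule union_bound_level_le[OF \<open>eps > 0\<close>])
  finally show ?thesis
    unfolding good_eq using Q.prob_compl[of "\<Union>k\<in>{1..m}. bad k"] bad(1) by auto
qed

end
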